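(* Let $\Gamma=(G,w,\ell)$ be a tropical curve. Then the map $$\mathcal C_G\longrightarrow R^{\mathrm{trop}}_\Gamma,\qquad P\longmapsto [F_P]$$ is a bijection.
   Context: A tropical curve is a triple $\Gamma=(G,w,\ell)$ where $G=(V,E)$ is a finite connected graph (loops and multiple edges allowed), $w\colon V\to\mathbb Z_{\ge 0}$ is a weight function with $2w(v)-2+\deg_G(v)>0$ for all $v$ (degrees count loops twice), and $\ell\colon E\to\mathbb R_{>0}$. Its genus is $g=\sum_v w(v)+|E|-|V|+1$. $\Gamma$ is regarded as a metric space by identifying each edge $e$ with a segment (a circle if $e$ is a loop) of length $\ell(e)$, glued at vertices; $p_e$ denotes the mid-point of $e$. A divisor on $\Gamma$ is a finite formal $\mathbb Z$-combination of points of $\Gamma$. A rational function is a continuous piecewise linear $f\colon\Gamma\to\mathbb R$ with integer slopes and finitely many pieces; $\operatorname{div}(f)=\sum_p \operatorname{ord}_p(f)p$, where $\operatorname{ord}_p(f)$ is the sum of the outgoing slopes of $f$ at $p$. $\operatorname{Pic}(\Gamma)$ is the group of divisors modulo divisors of rational functions; $[D]$ denotes the class and $D\sim D'$ means $[D]=[D']$. $\mathcal C_G$ is the set of subsets $P\subseteq E$ such that every vertex has even degree in the subgraph spanned by $P$ (loops counting twice); it is an $\mathbb F_2$-vector space under symmetric difference (it is the kernel of the boundary map $\mathbb F_2^E\to\mathbb F_2^V$). For $P\in\mathcal C_G$ set $F_P:=\sum_{v\in V}\frac{\deg_P(v)}{2}v-\sum_{e\in P}p_e$. The set of square roots of zero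 is $R^{\mathrm{trop}}_\Gamma=\{[D]\in\operatorname{Pic}(\Gamma): [2D]=0\}$. *)

theory Defs
  imports Complex_Main
begin

text \<open>A tropical curve is given by a finite vertex set V, a finite edge set E,
  endpoint maps src, tgt (a loop has src e = tgt e), a weight w and a length l.\<close>

definition deg :: "'e set \<Rightarrow> ('e \<Rightarrow> 'v) \<Rightarrow> ('e \<Rightarrow> 'v) \<Rightarrow> 'v \<Rightarrow> nat" where
  "deg P src tgt v = card {e\<in>P. src e = v} + card {e\<in>P. tgt e = v}"

definition adj_rel :: "'e set \<Rightarrow> ('e \<Rightarrow> 'v) \<Rightarrow> ('e \<Rightarrow> 'v) \<Rightarrow> ('v \<times> 'v) set" where
  "adj_rel E src tgt = {(u, v). \<exists>e\<in>E. (src e = u \<and> tgt e = v) \<or> (src e = v \<and> tgt e = u)}"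

definition tropical_curve ::
  "'v set \<Rightarrow> 'e set \<Rightarrow> ('e \<Rightarrow> 'v) \<Rightarrow> ('e \<Rightarrow> 'v) \<Rightarrow> ('v \<Rightarrow> nat) \<Rightarrow> ('e \<Rightarrow> real) \<Rightarrow> bool" where
  "tropical_curve V E src tgt w l \<longleftrightarrow>
     finite V \<and> finite E \<and> V \<noteq> {} \<and>
     (\<forall>e\<in>E. src e \<in> V \<and> tgt e \<in> V) \<and>
     (\<forall>u\<in>V. \<forall>v\<in>V. (u, v) \<in> (adj_rel E src tgt)\<^sup>*) \<and>
     (\<forall>v\<in>V. 2 * int (w v) - 2 + int (deg E src tgt v) > 0) \<and>
     (\<forall>e\<in>E. l e > 0)"

text \<open>Points of the metric space: vertices, and interior points of edges
  (parameter t with 0 < t < l e, measured from src e).\<close>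
datatype ('v, 'e) pt = Vert 'v | EPt 'e real

definition points :: "'v set \<Rightarrow> 'e set \<Rightarrow> ('e \<Rightarrow> real) \<Rightarrow> ('v, 'e) pt set" where
  "points V E l = Vert ` V \<union> {EPt e t | e t. e \<in> E \<and> 0 < t \<and> t < l e}"

definition edge_fun :: "('e \<Rightarrow> 'v) \<Rightarrow> ('e \<Rightarrow> 'v) \<Rightarrow> ('e \<Rightarrow> real) \<Rightarrow> (('v, 'e) pt \<Rightarrow> real)
    \<Rightarrow> 'e \<Rightarrow> real \<Rightarrow> real" where
  "edge_fun src tgt l f e t =
     (if t \<le> 0 then f (Vert (src e)) else if t \<ge> l e then f (Vert (tgt e)) else f (EPt e t))"

definition int_pl :: "real \<Rightarrow> (real \<Rightarrow> real) \<Rightarrow> bool" where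
  "int_pl L \<phi> \<longleftrightarrow> (\<exists>ts :: real list. length ts \<ge> 2 \<and> sorted_wrt (<) ts \<and>
      hd ts = 0 \<and> last ts = L \<and>
      (\<forall>i < length ts - 1. \<exists>s :: int. \<exists>c :: real.
          \<forall>t \<in> {ts ! i .. ts ! (i+1)}. \<phi> t = of_int s * t + c))"

definition rational_fun :: "'v set \<Rightarrow> 'e set \<Rightarrow> ('e \<Rightarrow> 'v) \<Rightarrow> ('e \<Rightarrow> 'v) \<Rightarrow> ('e \<Rightarrow> real)
    \<Rightarrow> (('v, 'e) pt \<Rightarrow> real) \<Rightarrow> bool" where
  "rational_fun V E src tgt l f \<longleftrightarrow> (\<forall>e\<in>E. int_pl (l e) (edge_fun src tgt l f e))"

definition rslope :: "(real \<Rightarrow> real) \<Rightarrow> real \<Rightarrow> real" where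
  "rslope \<phi> t = Lim (at_right 0) (\<lambda>h. (\<phi> (t + h) - \<phi> t) / h)"

definition lslope :: "(real \<Rightarrow> real) \<Rightarrow> real \<Rightarrow> real" where
  "lslope \<phi> t = Lim (at_right 0) (\<lambda>h. (\<phi> t - \<phi> (t - h)) / h)"

text \<open>ord_p(f): sum of outgoing slopes of f at p.\<close>
fun ord :: "'e set \<Rightarrow> ('e \<Rightarrow> 'v) \<Rightarrow> ('e \<Rightarrow> 'v) \<Rightarrow> ('e \<Rightarrow> real)
    \<Rightarrow> (('v, 'e) pt \<Rightarrow> real) \<Rightarrow> ('v, 'e) pt \<Rightarrow> real" where
  "ord E src tgt l f (Vert v) =
     (\<Sum>e\<in>{e\<in>E. src e = v}. rslope (edge_fun src tgt l f e) 0)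
   + (\<Sum>e\<in>{e\<in>E. tgt e = v}. - lslope (edge_fun src tgt l f e) (l e))"
| "ord E src tgt l f (EPt e t) =
     rslope (edge_fun src tgt l f e) t - lslope (edge_fun src tgt l f e) t"

definition is_divisor :: "'v set \<Rightarrow> 'e set \<Rightarrow> ('e \<Rightarrow> real) \<Rightarrow> (('v, 'e) pt \<Rightarrow> int) \<Rightarrow> bool" where
  "is_divisor V E l D \<longleftrightarrow> finite {p. D p \<noteq> 0} \<and> {p. D p \<noteq> 0} \<subseteq> points V E l"

definition principal :: "'v set \<Rightarrow> 'e set \<Rightarrow> ('e \<Rightarrow> 'v) \<Rightarrow> ('e \<Rightarrow> 'v) \<Rightarrow> ('e \<Rightarrow> real)
    \<Rightarrow> (('v, 'e) pt \<Rightarrow> int) \<Rightarrow> bool" where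
  "principal V E src tgt l D \<longleftrightarrow> is_divisor V E l D \<and>
     (\<exists>f. rational_fun V E src tgt l f \<and>
          (\<forall>p \<in> points V E l. of_int (D p) = ord E src tgt l f p))"

definition div_class :: "'v set \<Rightarrow> 'e set \<Rightarrow> ('e \<Rightarrow> 'v) \<Rightarrow> ('e \<Rightarrow> 'v) \<Rightarrow> ('e \<Rightarrow> real)
    \<Rightarrow> (('v, 'e) pt \<Rightarrow> int) \<Rightarrow> (('v, 'e) pt \<Rightarrow> int) set" where
  "div_class V E src tgt l D =
     {D'. is_divisor V E l D' \<and> principal V E src tgt l (\<lambda>p. D p - D' p)}"

definition Pic :: "'v set \<Rightarrow> 'e set \<Rightarrow> ('e \<Rightarrow> 'v) \<Rightarrow> ('e \<Rightarrow> 'v) \<Rightarrow> ('e \<Rightarrow> real)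
    \<Rightarrow> (('v, 'e) pt \<Rightarrow> int) set set" where
  "Pic V E src tgt l = {div_class V E src tgt l D | D. is_divisor V E l D}"

definition R_trop :: "'v set \<Rightarrow> 'e set \<Rightarrow> ('e \<Rightarrow> 'v) \<Rightarrow> ('e \<Rightarrow> 'v) \<Rightarrow> ('e \<Rightarrow> real)
    \<Rightarrow> (('v, 'e) pt \<Rightarrow> int) set set" where
  "R_trop V E src tgt l = {div_class V E src tgt l D | D.
      is_divisor V E l D \<and> principal V E src tgt l (\<lambda>p. 2 * D p)}"

definition cycle_space :: "'v set \<Rightarrow> 'e set \<Rightarrow> ('e \<Rightarrow> 'v) \<Rightarrow> ('e \<Rightarrow> 'v) \<Rightarrow> 'e set set" where
  "cycle_space V E src tgt = {P. P \<subseteq> E \<and> (\<forall>v\<in>V. even (deg P src tgt v))}"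

definition F_div :: "('e \<Rightarrow> 'v) \<Rightarrow> ('e \<Rightarrow> 'v) \<Rightarrow> ('e \<Rightarrow> real) \<Rightarrow> 'e set
    \<Rightarrow> ('v, 'e) pt \<Rightarrow> int" where
  "F_div src tgt l P p = (case p of
      Vert v \<Rightarrow> int (deg P src tgt v div 2)
    | EPt e t \<Rightarrow> (if e \<in> P \<and> t = l e / 2 then -1 else 0))"

end

(*
  If [2D] = 0, then 2D = div g for a rational function g. At an interior point p of an edge
  the slope of g jumps by 2D(p), an even integer, so the parity of the slope is constant
  along each edge. The edges P on which it is odd form a cycle, because at a vertex v the
  outgoing slopes add up to the even number 2D(v). The tent function of P, rising with
  slope 1/2 from both ends of every edge of P to its midpoint, has divisor F_P; hence
  g/2 minus the tent has integer slopes and divisor D - F_P, so [D] = [F_P]. Twice the tent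
  shows [2 F_P] = 0.

  For injectivity, if F_P ~ F_Q then some rational function f has the same divisor as the
  difference of the tents of P and Q. A function with zero divisor is harmonic: it is affine
  on every edge e, with slope s_e say, and the slopes have zero net outflow at every vertex;
  pairing these outflows with the vertex values gives sum_e s_e^2 l(e) = 0. So f has the
  same slopes as the difference of tents, which is impossible on an edge lying in exactly
  one of P and Q: there the latter has slope 1/2 or -1/2, while f has an integer slope.
*)

theory Submission
  imports Defs
begin

section \<open>Piecewise affine functions on an interval\<close>

text \<open>Unlike in \<^const>\<open>int_pl\<close>, slopes are arbitrary reals and the breakpoints form a finite set
  rather than a sorted list, which makes the notion closed under linear combinations.\<close>

definition piecewise_affine :: "real \<Rightarrow> (real \<Rightarrow> real) \<Rightarrow> bool" where
  "piecewise_affine L \<phi> \<longleftrightarrow> (\<exists>B. finite B \<and> (\<forall>a b. 0 \<le> a \<longrightarrow> a < b \<longrightarrow> b \<le> L \<longrightarrow>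
      B \<inter> {a<..<b} = {} \<longrightarrow> (\<exists>s c. \<forall>t\<in>{a..b}. \<phi> t = s * t + c)))"

lemma piecewise_affineE:
  assumes "piecewise_affine L \<phi>"
  obtains B where "finite B"
    "\<And>a b. 0 \<le> a \<Longrightarrow> a < b \<Longrightarrow> b \<le> L \<Longrightarrow> B \<inter> {a<..<b} = {} \<Longrightarrow>
       \<exists>s c. \<forall>t\<in>{a..b}. \<phi> t = s * t + c"
  using assms unfolding piecewise_affine_def by blast

lemma rslope_affine:
  assumes "a < b" "\<forall>t\<in>{a..b}. \<phi> t = s * t + c"
  shows "rslope \<phi> a = s"
  unfolding rslope_def
proof (rule tendsto_Lim[OF trivial_limit_at_right_real], rule tendsto_eventually)
  show "\<forall>\<^sub>F h in at_right 0. (\<phi> (a + h) - \<phi> a) / h = s"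
    unfolding eventually_at_right_field
    using assms by (intro exI[of _ "b - a"]) (auto simp: field_simps)
qed

lemma lslope_affine:
  assumes "a < b" "\<forall>t\<in>{a..b}. \<phi> t = s * t + c"
  shows "lslope \<phi> b = s"
  unfolding lslope_def
proof (rule tendsto_Lim[OF trivial_limit_at_right_real], rule tendsto_eventually)
  show "\<forall>\<^sub>F h in at_right 0. (\<phi> b - \<phi> (b - h)) / h = s"
    unfolding eventually_at_right_field
    using assms by (intro exI[of _ "b - a"]) (auto simp: field_simps)
qed

lemma piecewise_affine_right:
  assumes "piecewise_affine L \<phi>" "0 \<le> t" "t < L"
  obtains b c where "t < b" "b \<le> L" "\<forall>x\<in>{t..b}. \<phi> x = rslope \<phi> t * x + c"
proof -
  obtain B where "finite B" and affine: "\<And>a b. 0 \<le> a \<Longrightarrow> a < b \<Longrightarrow> b \<le> L \<Longrightarrow>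
      B \<inter> {a<..<b} = {} \<Longrightarrow> \<exists>s c. \<forall>t\<in>{a..b}. \<phi> t = s * t + c"
    using piecewise_affineE[OF assms(1)] by blast
  define A where "A = insert L {x\<in>B. t < x}"
  have "finite A" using \<open>finite B\<close> by (simp add: A_def)
  define b where "b = Min A"
  have "b \<in> A" unfolding b_def using \<open>finite A\<close> by (intro Min_in) (auto simp: A_def)
  then have "t < b" using assms by (auto simp: A_def)
  have "b \<le> L" unfolding b_def using \<open>finite A\<close> by (simp add: A_def)
  have "B \<inter> {t<..<b} = {}"
    using \<open>finite A\<close> by (auto simp: b_def A_def)
  then obtain s c where sc: "\<forall>x\<in>{t..b}. \<phi> x = s * x + c"
    using affine[OF assms(2) \<open>t < b\<close> \<open>b \<le> L\<close>] by blast
  with rslope_affine[OF \<open>t < b\<close> sc] show thesis using that \<open>t < b\<close> \<open>b \<le> L\<close> by blast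
qed

lemma piecewise_affine_left:
  assumes "piecewise_affine L \<phi>" "0 < t" "t \<le> L"
  obtains a c where "0 \<le> a" "a < t" "\<forall>x\<in>{a..t}. \<phi> x = lslope \<phi> t * x + c"
proof -
  obtain B where "finite B" and affine: "\<And>a b. 0 \<le> a \<Longrightarrow> a < b \<Longrightarrow> b \<le> L \<Longrightarrow>
      B \<inter> {a<..<b} = {} \<Longrightarrow> \<exists>s c. \<forall>t\<in>{a..b}. \<phi> t = s * t + c"
    using piecewise_affineE[OF assms(1)] by blast
  define A where "A = insert 0 {x\<in>B. x < t}"
  have "finite A" using \<open>finite B\<close> by (simp add: A_def)
  define a where "a = Max A"
  have "a \<in> A" unfolding a_def using \<open>finite A\<close> by (intro Max_in) (auto simp: A_def)
  then have "a < t" using assms by (auto simp: A_def)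
  have "0 \<le> a" unfolding a_def using \<open>finite A\<close> by (simp add: A_def)
  have "B \<inter> {a<..<t} = {}"
    using \<open>finite A\<close> by (auto simp: a_def A_def)
  then obtain s c where sc: "\<forall>x\<in>{a..t}. \<phi> x = s * x + c"
    using affine[OF \<open>0 \<le> a\<close> \<open>a < t\<close> assms(3)] by blast
  with lslope_affine[OF \<open>a < t\<close> sc] show thesis using that \<open>0 \<le> a\<close> \<open>a < t\<close> by blast
qed

lemma piecewise_affine_lincomb:
  assumes "piecewise_affine L \<phi>" "piecewise_affine L \<psi>"
  shows "piecewise_affine L (\<lambda>t. \<alpha> * \<phi> t + \<beta> * \<psi> t)"
proof -
  obtain B1 where "finite B1" and affine1: "\<And>a b. 0 \<le> a \<Longrightarrow> a < b \<Longrightarrow> b \<le> L \<Longrightarrow>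
      B1 \<inter> {a<..<b} = {} \<Longrightarrow> \<exists>s c. \<forall>t\<in>{a..b}. \<phi> t = s * t + c"
    using piecewise_affineE[OF assms(1)] by blast
  obtain B2 where "finite B2" and affine2: "\<And>a b. 0 \<le> a \<Longrightarrow> a < b \<Longrightarrow> b \<le> L \<Longrightarrow>
      B2 \<inter> {a<..<b} = {} \<Longrightarrow> \<exists>s c. \<forall>t\<in>{a..b}. \<psi> t = s * t + c"
    using piecewise_affineE[OF assms(2)] by blast
  show ?thesis unfolding piecewise_affine_def
  proof (intro exI[of _ "B1 \<union> B2"] conjI allI impI)
    fix a b :: real
    assume ab: "0 \<le> a" "a < b" "b \<le> L" "(B1 \<union> B2) \<inter> {a<..<b} = {}"
    obtain s1 c1 where "\<forall>t\<in>{a..b}. \<phi> t = s1 * t + c1" using affine1 ab by blast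
    moreover obtain s2 c2 where "\<forall>t\<in>{a..b}. \<psi> t = s2 * t + c2" using affine2 ab by blast
    ultimately show "\<exists>s c. \<forall>t\<in>{a..b}. \<alpha> * \<phi> t + \<beta> * \<psi> t = s * t + c"
      by (intro exI[of _ "\<alpha> * s1 + \<beta> * s2"] exI[of _ "\<alpha> * c1 + \<beta> * c2"])
        (simp add: algebra_simps)
  qed (use \<open>finite B1\<close> \<open>finite B2\<close> in simp)
qed

lemma rslope_lincomb:
  assumes "piecewise_affine L \<phi>" "piecewise_affine L \<psi>" "0 \<le> t" "t < L"
  shows "rslope (\<lambda>x. \<alpha> * \<phi> x + \<beta> * \<psi> x) t = \<alpha> * rslope \<phi> t + \<beta> * rslope \<psi> t"
proof -
  obtain b1 c1 where "t < b1" "\<forall>x\<in>{t..b1}. \<phi> x = rslope \<phi> t * x + c1"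
    using assms(1,3,4) by (rule piecewise_affine_right)
  moreover obtain b2 c2 where "t < b2" "\<forall>x\<in>{t..b2}. \<psi> x = rslope \<psi> t * x + c2"
    using assms(2,3,4) by (rule piecewise_affine_right)
  ultimately show ?thesis
    by (intro rslope_affine[of t "min b1 b2" _ _ "\<alpha> * c1 + \<beta> * c2"]) (auto simp: algebra_simps)
qed

lemma lslope_lincomb:
  assumes "piecewise_affine L \<phi>" "piecewise_affine L \<psi>" "0 < t" "t \<le> L"
  shows "lslope (\<lambda>x. \<alpha> * \<phi> x + \<beta> * \<psi> x) t = \<alpha> * lslope \<phi> t + \<beta> * lslope \<psi> t"
proof -
  obtain a1 c1 where "a1 < t" "\<forall>x\<in>{a1..t}. \<phi> x = lslope \<phi> t * x + c1"
    using assms(1,3,4) by (rule piecewise_affine_left)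
  moreover obtain a2 c2 where "a2 < t" "\<forall>x\<in>{a2..t}. \<psi> x = lslope \<psi> t * x + c2"
    using assms(2,3,4) by (rule piecewise_affine_left)
  ultimately show ?thesis
    by (intro lslope_affine[of "max a1 a2" t _ _ "\<alpha> * c1 + \<beta> * c2"]) (auto simp: algebra_simps)
qed

lemma sorted_nth_gap:
  fixes xs :: "'a::linorder list"
  assumes "sorted_wrt (<) xs" "Suc i < length xs" "x \<in> set xs"
  shows "x \<notin> {xs ! i<..<xs ! Suc i}"
proof
  assume x: "x \<in> {xs ! i<..<xs ! Suc i}"
  obtain k where k: "k < length xs" "xs ! k = x" using assms(3) by (metis in_set_conv_nth)
  have "sorted xs" using assms(1) by (rule strict_sorted_imp_sorted)
  show False
  proof (cases "k \<le> i")
    case True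
    then show False using sorted_nth_mono[OF \<open>sorted xs\<close> True] assms(2) x k by auto
  next
    case False
    then show False using sorted_nth_mono[OF \<open>sorted xs\<close>, of "Suc i" k] x k by auto
  qed
qed

lemma sorted_list_of_set_endpoints:
  fixes A :: "'a::linorder set"
  assumes "finite A" "a \<in> A" "b \<in> A" "A \<subseteq> {a..b}"
  shows "hd (sorted_list_of_set A) = a" "last (sorted_list_of_set A) = b"
proof -
  have hd_le: "hd xs \<le> x" if "sorted xs" "x \<in> set xs" for xs :: "'a list" and x
    using that by (induction xs) auto
  have le_last: "x \<le> last xs" if "sorted xs" "x \<in> set xs" for xs :: "'a list" and x
    using that by (induction xs) (auto simp: last_in_set)
  let ?xs = "sorted_list_of_set A"
  have set_xs: "set ?xs = A" using assms(1) by simp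
  then have "?xs \<noteq> []" using assms(2) by auto
  then have "hd ?xs \<in> A" "last ?xs \<in> A"
    using hd_in_set last_in_set set_xs by blast+
  moreover have "hd ?xs \<le> a" "b \<le> last ?xs"
    using hd_le[of ?xs a] le_last[of ?xs b] set_xs assms(2,3) by simp_all
  ultimately show "hd ?xs = a" "last ?xs = b"
    using assms(4) by (meson atLeastAtMost_iff order.antisym subsetD)+
qed

lemma piecewise_affine_partition:
  assumes "piecewise_affine L \<phi>" "0 < L"
  obtains ts where "length ts \<ge> 2" "sorted_wrt (<) ts" "hd ts = 0" "last ts = L"
    "set ts \<subseteq> {0..L}"
    "\<And>i. Suc i < length ts \<Longrightarrow> \<exists>s c. \<forall>t\<in>{ts ! i..ts ! Suc i}. \<phi> t = s * t + c"
proof -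
  obtain B where "finite B" and affine: "\<And>a b. 0 \<le> a \<Longrightarrow> a < b \<Longrightarrow> b \<le> L \<Longrightarrow>
      B \<inter> {a<..<b} = {} \<Longrightarrow> \<exists>s c. \<forall>t\<in>{a..b}. \<phi> t = s * t + c"
    using piecewise_affineE[OF assms(1)] by blast
  define A where "A = insert 0 (insert L (B \<inter> {0<..<L}))"
  have "finite A" using \<open>finite B\<close> by (simp add: A_def)
  have A_range: "A \<subseteq> {0..L}" using assms(2) by (auto simp: A_def)
  define ts where "ts = sorted_list_of_set A"
  have set_ts: "set ts = A" and sorted: "sorted_wrt (<) ts"
    using \<open>finite A\<close> by (simp_all add: ts_def)
  have "length ts \<ge> 2"
    using \<open>finite A\<close> assms(2) by (simp add: ts_def A_def card_insert_if)
  have "hd ts = 0" "last ts = L"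
    using sorted_list_of_set_endpoints[OF \<open>finite A\<close> _ _ A_range] by (simp_all add: ts_def A_def)
  have "\<exists>s c. \<forall>t\<in>{ts ! i..ts ! Suc i}. \<phi> t = s * t + c" if i: "Suc i < length ts" for i
  proof (rule affine)
    have "ts ! i \<in> A" "ts ! Suc i \<in> A" using i set_ts Suc_lessD nth_mem by metis+
    then show "0 \<le> ts ! i" "ts ! Suc i \<le> L" using A_range by auto
    show "ts ! i < ts ! Suc i" using sorted_wrt_nth_less[OF sorted] i by simp
    show "B \<inter> {ts ! i<..<ts ! Suc i} = {}"
    proof (intro equalityI subsetI)
      fix x assume x: "x \<in> B \<inter> {ts ! i<..<ts ! Suc i}"
      then have "x \<in> set ts"
        using \<open>0 \<le> ts ! i\<close> \<open>ts ! Suc i \<le> L\<close> set_ts by (auto simp: A_def)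
      then show "x \<in> {}" using sorted_nth_gap[OF sorted i] x by blast
    qed simp
  qed
  with that \<open>length ts \<ge> 2\<close> sorted \<open>hd ts = 0\<close> \<open>last ts = L\<close> A_range set_ts
  show thesis by blast
qed

lemma sorted_segment_containing:
  fixes ts :: "'a::linorder list"
  assumes "sorted_wrt (<) ts" "ts \<noteq> []" "hd ts \<le> a" "a < last ts"
  obtains i where "Suc i < length ts" "ts ! i \<le> a" "a < ts ! Suc i"
  using assms
proof (induction ts arbitrary: thesis)
  case (Cons x ys)
  then have "ys \<noteq> []" by auto
  show thesis
  proof (cases "a < hd ys")
    case True
    then show thesis using Cons.prems \<open>ys \<noteq> []\<close> by (intro Cons.prems(1)[of 0]) (auto simp: hd_conv_nth)
  next
    case False
    obtain i where "Suc i < length ys" "ys ! i \<le> a" "a < ys ! Suc i"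
      using Cons.IH[of thesis] Cons.prems \<open>ys \<noteq> []\<close> False
      by (metis last_ConsR not_le sorted_wrt.simps(2))
    then show thesis by (intro Cons.prems(1)[of "Suc i"]) auto
  qed
qed simp

lemma piecewise_affine_if_int_pl:
  assumes "int_pl L \<phi>"
  shows "piecewise_affine L \<phi> \<and> (\<forall>t\<in>{0..<L}. rslope \<phi> t \<in> \<int>)"
proof -
  obtain ts where ts: "length ts \<ge> 2" "sorted_wrt (<) ts" "hd ts = 0" "last ts = L"
    and pieces: "\<And>i. i < length ts - 1 \<Longrightarrow> \<exists>s::int. \<exists>c. \<forall>t\<in>{ts ! i..ts ! (i+1)}. \<phi> t = s * t + c"
    using assms unfolding int_pl_def by blast
  have "ts \<noteq> []" using ts(1) by auto
  have piece: "\<exists>s::int. \<exists>c. \<forall>t\<in>{ts ! i..ts ! Suc i}. \<phi> t = s * t + c"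
    if "Suc i < length ts" for i
    using pieces[of i] that by simp
  have segment: "\<exists>i. Suc i < length ts \<and> ts ! i \<le> a \<and> a < ts ! Suc i" if "0 \<le> a" "a < L" for a
    using sorted_segment_containing[OF ts(2) \<open>ts \<noteq> []\<close>] ts(3,4) that by metis
  have "piecewise_affine L \<phi>"
    unfolding piecewise_affine_def
  proof (intro exI[of _ "set ts"] conjI allI impI)
    fix a b assume ab: "0 \<le> a" "a < b" "b \<le> L" "set ts \<inter> {a<..<b} = {}"
    then obtain i where i: "Suc i < length ts" "ts ! i \<le> a" "a < ts ! Suc i"
      using segment by fastforce
    have "b \<le> ts ! Suc i"
    proof (rule ccontr)
      assume "\<not> b \<le> ts ! Suc i"
      then have "ts ! Suc i \<in> set ts \<inter> {a<..<b}" using i(1,3) by auto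
      with ab(4) show False by simp
    qed
    then show "\<exists>s c. \<forall>t\<in>{a..b}. \<phi> t = s * t + c"
      using piece[OF i(1)] i(2) by fastforce
  qed simp
  moreover have "rslope \<phi> t \<in> \<int>" if t: "t \<in> {0..<L}" for t
  proof -
    obtain i where i: "Suc i < length ts" "ts ! i \<le> t" "t < ts ! Suc i"
      using segment t by fastforce
    obtain s :: int and c where "\<forall>x\<in>{ts ! i..ts ! Suc i}. \<phi> x = s * x + c"
      using piece[OF i(1)] by blast
    then have "rslope \<phi> t = s" using i by (intro rslope_affine[of t "ts ! Suc i" _ _ c]) auto
    then show ?thesis by simp
  qed
  ultimately show ?thesis by blast
qed

lemma int_pl_if_piecewise_affine:
  assumes "0 < L" "piecewise_affine L \<phi>" and int: "\<forall>t\<in>{0..<L}. rslope \<phi> t \<in> \<int>"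
  shows "int_pl L \<phi>"
proof -
  obtain ts where ts: "length ts \<ge> 2" "sorted_wrt (<) ts" "hd ts = 0" "last ts = L"
      "set ts \<subseteq> {0..L}"
    and pieces: "\<And>i. Suc i < length ts \<Longrightarrow> \<exists>s c. \<forall>t\<in>{ts ! i..ts ! Suc i}. \<phi> t = s * t + c"
    using piecewise_affine_partition[OF assms(2,1)] by blast
  have "\<exists>s::int. \<exists>c. \<forall>t\<in>{ts ! i..ts ! Suc i}. \<phi> t = s * t + c" if i: "Suc i < length ts" for i
  proof -
    obtain s c where sc: "\<forall>t\<in>{ts ! i..ts ! Suc i}. \<phi> t = s * t + c" using pieces[OF i] by blast
    have "ts ! i \<in> set ts" "ts ! Suc i \<in> set ts" using i by simp_all
    then have "ts ! i \<ge> 0" "ts ! Suc i \<le> L" using ts(5) by auto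
    moreover have "ts ! i < ts ! Suc i" using sorted_wrt_nth_less[OF ts(2)] i by simp
    ultimately have "s \<in> \<int>" using int rslope_affine[OF _ sc] by auto
    then show ?thesis using sc by (auto elim!: Ints_cases)
  qed
  then show ?thesis unfolding int_pl_def using ts by auto
qed

lemma int_pl_iff_piecewise_affine:
  "0 < L \<Longrightarrow> int_pl L \<phi> \<longleftrightarrow> piecewise_affine L \<phi> \<and> (\<forall>t\<in>{0..<L}. rslope \<phi> t \<in> \<int>)"
  using piecewise_affine_if_int_pl int_pl_if_piecewise_affine by blast

lemma piecewise_affine_induct:
  assumes "piecewise_affine L \<phi>" "0 < L" "Pr 0"
    and step: "\<And>a b s c. 0 \<le> a \<Longrightarrow> a < b \<Longrightarrow> b \<le> L \<Longrightarrow> \<forall>t\<in>{a..b}. \<phi> t = s * t + c \<Longrightarrow>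
      Pr a \<Longrightarrow> \<forall>t\<in>{a..b}. Pr t"
  shows "\<forall>t\<in>{0..L}. Pr t"
proof -
  obtain ts where ts: "length ts \<ge> 2" "sorted_wrt (<) ts" "hd ts = 0" "last ts = L"
      "set ts \<subseteq> {0..L}"
    and pieces: "\<And>i. Suc i < length ts \<Longrightarrow> \<exists>s c. \<forall>t\<in>{ts ! i..ts ! Suc i}. \<phi> t = s * t + c"
    using piecewise_affine_partition[OF assms(1,2)] by blast
  have "\<forall>t\<in>{0..ts ! i}. Pr t" if "i < length ts" for i
    using that
  proof (induction i)
    case 0
    then show ?case using ts(3) \<open>Pr 0\<close> by (simp add: hd_conv_nth)
  next
    case (Suc i)
    have "ts ! i \<in> set ts" "ts ! Suc i \<in> set ts" using Suc.prems by simp_all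
    then have "0 \<le> ts ! i" "ts ! Suc i \<le> L" using ts(5) by auto
    moreover have "ts ! i < ts ! Suc i" using sorted_wrt_nth_less[OF ts(2)] Suc.prems by simp
    moreover obtain s c where "\<forall>t\<in>{ts ! i..ts ! Suc i}. \<phi> t = s * t + c"
      using pieces[OF Suc.prems] by blast
    moreover have IH: "\<forall>t\<in>{0..ts ! i}. Pr t" using Suc by simp
    ultimately have "\<forall>t\<in>{ts ! i..ts ! Suc i}. Pr t" by (intro step) auto
    with IH show ?case by (metis atLeastAtMost_iff linorder_le_cases)
  qed
  moreover have "ts ! (length ts - 1) = L" using ts(1,4) by (metis last_conv_nth list.size(3) not_numeral_le_zero)
  ultimately show ?thesis using ts(1) by (metis diff_less zero_less_numeral order_less_le_trans less_one)
qed

lemma piecewise_affine_slope_jumps: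
  fixes G :: "real set"
  assumes "piecewise_affine L \<phi>" "0 < L" "0 \<in> G" "\<And>x y. x \<in> G \<Longrightarrow> y \<in> G \<Longrightarrow> x + y \<in> G"
    and jumps: "\<And>t. 0 < t \<Longrightarrow> t < L \<Longrightarrow> rslope \<phi> t - lslope \<phi> t \<in> G"
  shows "0 < t \<Longrightarrow> t \<le> L \<Longrightarrow> lslope \<phi> t - rslope \<phi> 0 \<in> G"
    and "0 \<le> t \<Longrightarrow> t < L \<Longrightarrow> rslope \<phi> t - rslope \<phi> 0 \<in> G"
proof -
  define \<sigma> where "\<sigma> = rslope \<phi> 0"
  have left: "\<forall>t\<in>{0..L}. 0 < t \<longrightarrow> lslope \<phi> t - \<sigma> \<in> G"
  proof (rule piecewise_affine_induct[OF assms(1,2)])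
    fix a b s c
    assume ab: "0 \<le> a" "a < b" "b \<le> L" and affine: "\<forall>t\<in>{a..b}. \<phi> t = s * t + c"
      and IH: "0 < a \<longrightarrow> lslope \<phi> a - \<sigma> \<in> G"
    have "rslope \<phi> a = s" using rslope_affine[OF ab(2) affine] .
    moreover have "rslope \<phi> a - \<sigma> \<in> G"
    proof (cases "a = 0")
      case False
      then have "(rslope \<phi> a - lslope \<phi> a) + (lslope \<phi> a - \<sigma>) \<in> G"
        using ab IH by (intro assms(4) jumps) auto
      then show ?thesis by simp
    qed (simp add: \<sigma>_def \<open>0 \<in> G\<close>)
    moreover have "lslope \<phi> t = s" if "a < t" "t \<le> b" for t
      using affine that by (intro lslope_affine[of a t _ _ c]) auto
    ultimately show "\<forall>t\<in>{a..b}. 0 < t \<longrightarrow> lslope \<phi> t - \<sigma> \<in> G"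
      using IH by (metis atLeastAtMost_iff order_le_less)
  qed simp
  then show "0 < t \<Longrightarrow> t \<le> L \<Longrightarrow> lslope \<phi> t - rslope \<phi> 0 \<in> G"
    by (simp add: \<sigma>_def)
  assume t: "0 \<le> t" "t < L"
  show "rslope \<phi> t - rslope \<phi> 0 \<in> G"
  proof (cases "t = 0")
    case False
    then have "(rslope \<phi> t - lslope \<phi> t) + (lslope \<phi> t - \<sigma>) \<in> G"
      using t left by (intro assms(4) jumps) auto
    then show ?thesis by (simp add: \<sigma>_def)
  qed (simp add: \<open>0 \<in> G\<close>)
qed

lemma piecewise_affine_without_kinks:
  assumes "piecewise_affine L \<phi>" "0 < L"
    and smooth: "\<And>t. 0 < t \<Longrightarrow> t < L \<Longrightarrow> rslope \<phi> t = lslope \<phi> t"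
  shows "\<forall>t\<in>{0..L}. \<phi> t = rslope \<phi> 0 * t + \<phi> 0"
proof (rule piecewise_affine_induct[OF assms(1,2)])
  fix a b s c
  assume ab: "0 \<le> a" "a < b" "b \<le> L" and affine: "\<forall>t\<in>{a..b}. \<phi> t = s * t + c"
    and IH: "\<phi> a = rslope \<phi> 0 * a + \<phi> 0"
  have "rslope \<phi> a - rslope \<phi> 0 \<in> {0}"
    using ab smooth by (intro piecewise_affine_slope_jumps(2)[OF assms(1,2)]) auto
  then have "s = rslope \<phi> 0" using rslope_affine[OF ab(2) affine] by simp
  moreover have "c = \<phi> 0" using IH affine ab(2) \<open>s = rslope \<phi> 0\<close> by auto
  ultimately show "\<forall>t\<in>{a..b}. \<phi> t = rslope \<phi> 0 * t + \<phi> 0" using affine by simp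
qed simp

section \<open>Rational functions and principal divisors\<close>

definition piecewise_affine_fun ::
    "'e set \<Rightarrow> ('e \<Rightarrow> 'v) \<Rightarrow> ('e \<Rightarrow> 'v) \<Rightarrow> ('e \<Rightarrow> real) \<Rightarrow> (('v, 'e) pt \<Rightarrow> real) \<Rightarrow> bool" where
  "piecewise_affine_fun E src tgt l f \<longleftrightarrow> (\<forall>e\<in>E. piecewise_affine (l e) (edge_fun src tgt l f e))"

lemma edge_fun_lincomb [simp]:
  "edge_fun src tgt l (\<lambda>p. \<alpha> * f p + \<beta> * g p) e
     = (\<lambda>t. \<alpha> * edge_fun src tgt l f e t + \<beta> * edge_fun src tgt l g e t)"
  unfolding edge_fun_def by auto

lemma piecewise_affine_fun_lincomb:
  "piecewise_affine_fun E src tgt l f \<Longrightarrow> piecewise_affine_fun E src tgt l g \<Longrightarrow>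
   piecewise_affine_fun E src tgt l (\<lambda>p. \<alpha> * f p + \<beta> * g p)"
  unfolding piecewise_affine_fun_def by (simp add: piecewise_affine_lincomb)

lemma rational_fun_iff:
  assumes "\<forall>e\<in>E. 0 < l e"
  shows "rational_fun V E src tgt l f \<longleftrightarrow> piecewise_affine_fun E src tgt l f \<and>
           (\<forall>e\<in>E. \<forall>t\<in>{0..<l e}. rslope (edge_fun src tgt l f e) t \<in> \<int>)"
  using assms
  by (auto simp: rational_fun_def piecewise_affine_fun_def int_pl_iff_piecewise_affine)

lemma rational_fun_piecewise_affine_fun:
  "\<forall>e\<in>E. 0 < l e \<Longrightarrow> rational_fun V E src tgt l f \<Longrightarrow> piecewise_affine_fun E src tgt l f"
  by (simp add: rational_fun_iff)

lemma rational_fun_rslope_Ints: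
  "\<forall>e\<in>E. 0 < l e \<Longrightarrow> rational_fun V E src tgt l f \<Longrightarrow> e \<in> E \<Longrightarrow> 0 \<le> t \<Longrightarrow> t < l e \<Longrightarrow>
   rslope (edge_fun src tgt l f e) t \<in> \<int>"
  by (simp add: rational_fun_iff)

lemma points_Vert [simp]: "Vert v \<in> points V E l \<longleftrightarrow> v \<in> V"
  unfolding points_def by auto

lemma points_EPt [simp]: "EPt e t \<in> points V E l \<longleftrightarrow> e \<in> E \<and> 0 < t \<and> t < l e"
  unfolding points_def by auto

lemma ord_lincomb:
  assumes pos: "\<forall>e\<in>E. 0 < l e"
    and f: "piecewise_affine_fun E src tgt l f" and g: "piecewise_affine_fun E src tgt l g"
    and p: "p \<in> points V E l"
  shows "ord E src tgt l (\<lambda>p. \<alpha> * f p + \<beta> * g p) p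
           = \<alpha> * ord E src tgt l f p + \<beta> * ord E src tgt l g p"
proof (cases p)
  case (Vert v)
  have slopes: "rslope (edge_fun src tgt l (\<lambda>p. \<alpha> * f p + \<beta> * g p) e) 0
      = \<alpha> * rslope (edge_fun src tgt l f e) 0 + \<beta> * rslope (edge_fun src tgt l g e) 0"
    "- lslope (edge_fun src tgt l (\<lambda>p. \<alpha> * f p + \<beta> * g p) e) (l e)
      = \<alpha> * - lslope (edge_fun src tgt l f e) (l e) + \<beta> * - lslope (edge_fun src tgt l g e) (l e)"
    if "e \<in> E" for e
    using f g pos that unfolding piecewise_affine_fun_def
    by (auto simp: rslope_lincomb lslope_lincomb)
  have "(\<Sum>e\<in>{e\<in>E. src e = v}. rslope (edge_fun src tgt l (\<lambda>p. \<alpha> * f p + \<beta> * g p) e) 0)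
      = (\<Sum>e\<in>{e\<in>E. src e = v}. \<alpha> * rslope (edge_fun src tgt l f e) 0
          + \<beta> * rslope (edge_fun src tgt l g e) 0)"
    "(\<Sum>e\<in>{e\<in>E. tgt e = v}. - lslope (edge_fun src tgt l (\<lambda>p. \<alpha> * f p + \<beta> * g p) e) (l e))
      = (\<Sum>e\<in>{e\<in>E. tgt e = v}. \<alpha> * - lslope (edge_fun src tgt l f e) (l e)
          + \<beta> * - lslope (edge_fun src tgt l g e) (l e))"
    using slopes by (auto intro!: sum.cong simp del: edge_fun_lincomb)
  then show ?thesis
    unfolding Vert ord.simps
    by (simp only: sum.distrib sum_distrib_left[symmetric]) (simp add: algebra_simps)
next
  case (EPt e t)
  then have "e \<in> E" "0 < t" "t < l e" using p by auto
  then have "piecewise_affine (l e) (edge_fun src tgt l f e)"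
    "piecewise_affine (l e) (edge_fun src tgt l g e)"
    using f g by (auto simp: piecewise_affine_fun_def)
  with \<open>0 < t\<close> \<open>t < l e\<close> show ?thesis
    by (simp add: EPt rslope_lincomb lslope_lincomb algebra_simps)
qed

lemma rational_fun_lincomb:
  assumes "\<forall>e\<in>E. 0 < l e" "\<alpha> \<in> \<int>" "\<beta> \<in> \<int>"
    and "rational_fun V E src tgt l f" "rational_fun V E src tgt l g"
  shows "rational_fun V E src tgt l (\<lambda>p. \<alpha> * f p + \<beta> * g p)"
  using assms
  by (auto simp: rational_fun_iff piecewise_affine_fun_def piecewise_affine_lincomb
      rslope_lincomb)

lemma is_divisor_lincomb:
  assumes "is_divisor V E l A" "is_divisor V E l B"
  shows "is_divisor V E l (\<lambda>p. a * A p + b * B p)"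
proof -
  have "{p. a * A p + b * B p \<noteq> 0} \<subseteq> {p. A p \<noteq> 0} \<union> {p. B p \<noteq> 0}" by auto
  then show ?thesis using assms unfolding is_divisor_def by (auto dest: finite_subset)
qed

lemma principal_lincomb:
  assumes pos: "\<forall>e\<in>E. 0 < l e"
    and A: "principal V E src tgt l A" and B: "principal V E src tgt l B"
  shows "principal V E src tgt l (\<lambda>p. a * A p + b * B p)"
proof -
  obtain f where f: "rational_fun V E src tgt l f"
    "\<forall>p\<in>points V E l. of_int (A p) = ord E src tgt l f p"
    using A unfolding principal_def by blast
  obtain g where g: "rational_fun V E src tgt l g"
    "\<forall>p\<in>points V E l. of_int (B p) = ord E src tgt l g p"
    using B unfolding principal_def by blast
  let ?h = "\<lambda>p. of_int a * f p + of_int b * g p"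
  have "rational_fun V E src tgt l ?h"
    using rational_fun_lincomb[OF pos _ _ f(1) g(1)] by simp
  moreover have "of_int (a * A p + b * B p) = ord E src tgt l ?h p" if "p \<in> points V E l" for p
    using f g that pos ord_lincomb[OF pos _ _ that]
    by (simp add: rational_fun_iff)
  moreover have "is_divisor V E l (\<lambda>p. a * A p + b * B p)"
    using A B by (intro is_divisor_lincomb) (auto simp: principal_def)
  ultimately show ?thesis unfolding principal_def by blast
qed

lemma principal_zero:
  assumes "\<forall>e\<in>E. 0 < l e"
  shows "principal V E src tgt l (\<lambda>p. 0)"
proof -
  have edge: "edge_fun src tgt l (\<lambda>p. 0) e = (\<lambda>t. 0)" for e
    unfolding edge_fun_def by (simp add: fun_eq_iff)
  have zero: "\<forall>t\<in>{a..b}. (\<lambda>t. 0) t = 0 * t + (0::real)" for a b :: real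
    by simp
  have "rslope (\<lambda>t. 0) t = 0" "lslope (\<lambda>t. 0) t = 0" for t
    using rslope_affine[OF _ zero, of t "t + 1"] lslope_affine[OF _ zero, of "t - 1" t] by simp_all
  moreover have "piecewise_affine L (\<lambda>t. 0)" for L
    unfolding piecewise_affine_def by (intro exI[of _ "{}"]) (auto intro!: exI[of _ 0])
  ultimately have "rational_fun V E src tgt l (\<lambda>p. 0)"
    using assms by (simp add: rational_fun_iff piecewise_affine_fun_def edge)
  moreover have "ord E src tgt l (\<lambda>p. 0) p = 0" for p
    using \<open>\<And>t. rslope (\<lambda>t. 0) t = 0\<close> \<open>\<And>t. lslope (\<lambda>t. 0) t = 0\<close>
    by (cases p) (simp_all add: edge)
  moreover have "is_divisor V E l (\<lambda>p. 0)" by (simp add: is_divisor_def)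
  ultimately show ?thesis unfolding principal_def by auto
qed

lemma div_class_eqI:
  assumes pos: "\<forall>e\<in>E. 0 < l e" and "principal V E src tgt l (\<lambda>p. D p - D' p)"
  shows "div_class V E src tgt l D = div_class V E src tgt l D'"
proof -
  have "principal V E src tgt l (\<lambda>p. D' p - X p) \<longleftrightarrow> principal V E src tgt l (\<lambda>p. D p - X p)" for X
    using principal_lincomb[OF pos _ assms(2), of "\<lambda>p. D p - X p" 1 "-1"]
      principal_lincomb[OF pos _ assms(2), of "\<lambda>p. D' p - X p" 1 1]
    by (auto simp: algebra_simps)
  then show ?thesis unfolding div_class_def by blast
qed

lemma principal_if_div_class_eq:
  assumes pos: "\<forall>e\<in>E. 0 < l e" and "is_divisor V E l D'"
    and "div_class V E src tgt l D = div_class V E src tgt l D'"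
  shows "principal V E src tgt l (\<lambda>p. D p - D' p)"
proof -
  have "D' \<in> div_class V E src tgt l D'"
    using assms principal_zero[OF pos] by (simp add: div_class_def)
  then have "D' \<in> div_class V E src tgt l D" using assms(3) by simp
  then show ?thesis unfolding div_class_def by simp
qed

section \<open>The tent function of a cycle\<close>

definition tent :: "('e \<Rightarrow> real) \<Rightarrow> 'e set \<Rightarrow> ('v, 'e) pt \<Rightarrow> real" where
  "tent l P p = (case p of Vert v \<Rightarrow> 0 | EPt e t \<Rightarrow> if e \<in> P then min t (l e - t) / 2 else 0)"

lemma edge_fun_tent:
  "edge_fun src tgt l (tent l P) e t = (if e \<in> P \<and> 0 < t \<and> t < l e then min t (l e - t) / 2 else 0)"
  by (simp add: edge_fun_def tent_def)

lemma tent_affine_pieces: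
  assumes "e \<in> P"
  shows "\<forall>t\<in>{0..l e / 2}. edge_fun src tgt l (tent l P) e t = 1/2 * t + 0"
    and "\<forall>t\<in>{l e / 2..l e}. edge_fun src tgt l (tent l P) e t = -1/2 * t + l e / 2"
  using assms by (auto simp: edge_fun_tent min_def)

lemma tent_off_P:
  "e \<notin> P \<Longrightarrow> \<forall>t\<in>A. edge_fun src tgt l (tent l P) e t = 0 * t + 0"
  by (simp add: edge_fun_tent)

lemma piecewise_affine_tent: "piecewise_affine (l e) (edge_fun src tgt l (tent l P) e)"
  unfolding piecewise_affine_def
proof (intro exI[of _ "{l e / 2}"] conjI allI impI)
  fix a b assume ab: "0 \<le> a" "a < b" "b \<le> l e" "{l e / 2} \<inter> {a<..<b} = {}"
  show "\<exists>s c. \<forall>t\<in>{a..b}. edge_fun src tgt l (tent l P) e t = s * t + c"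
  proof (cases "e \<in> P")
    case True
    have "b \<le> l e / 2 \<or> l e / 2 \<le> a" using ab(4) by auto
    then show ?thesis
    proof
      assume "b \<le> l e / 2"
      then show ?thesis
        using tent_affine_pieces(1)[OF True, where src=src and tgt=tgt and l=l] ab(1)
        by (intro exI[of _ "1/2"] exI[of _ 0]) auto
    next
      assume "l e / 2 \<le> a"
      then show ?thesis
        using tent_affine_pieces(2)[OF True, where src=src and tgt=tgt and l=l] ab(3)
        by (intro exI[of _ "-1/2"] exI[of _ "l e / 2"]) auto
    qed
  next
    case False
    show ?thesis using tent_off_P[OF False, where A="{a..b}" and src=src and tgt=tgt and l=l] by blast
  qed
qed simp

lemma piecewise_affine_fun_tent: "piecewise_affine_fun E src tgt l (tent l P)"
  by (simp add: piecewise_affine_fun_def piecewise_affine_tent)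

lemma tent_rslope:
  assumes "0 \<le> t" "t < l e"
  shows "rslope (edge_fun src tgt l (tent l P) e) t
           = (if e \<in> P then if t < l e / 2 then 1/2 else -1/2 else 0)"
proof -
  consider "e \<notin> P" | "e \<in> P" "t < l e / 2" | "e \<in> P" "l e / 2 \<le> t" by linarith
  then show ?thesis
  proof cases
    case 1
    then show ?thesis using rslope_affine[OF assms(2) tent_off_P] by simp
  next
    case 2
    then have "\<forall>x\<in>{t..l e / 2}. edge_fun src tgt l (tent l P) e x = 1/2 * x + 0"
      using tent_affine_pieces(1)[where src=src and tgt=tgt and l=l] assms by auto
    from rslope_affine[OF _ this] 2 show ?thesis by simp
  next
    case 3
    then have "\<forall>x\<in>{t..l e}. edge_fun src tgt l (tent l P) e x = -1/2 * x + l e / 2"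
      using tent_affine_pieces(2)[where src=src and tgt=tgt and l=l] by auto
    from rslope_affine[OF assms(2) this] 3 show ?thesis by simp
  qed
qed

lemma tent_lslope:
  assumes "0 < t" "t \<le> l e"
  shows "lslope (edge_fun src tgt l (tent l P) e) t
           = (if e \<in> P then if t \<le> l e / 2 then 1/2 else -1/2 else 0)"
proof -
  consider "e \<notin> P" | "e \<in> P" "t \<le> l e / 2" | "e \<in> P" "l e / 2 < t" by linarith
  then show ?thesis
  proof cases
    case 1
    then show ?thesis using lslope_affine[OF assms(1) tent_off_P] by simp
  next
    case 2
    then have "\<forall>x\<in>{0..t}. edge_fun src tgt l (tent l P) e x = 1/2 * x + 0"
      using tent_affine_pieces(1)[where src=src and tgt=tgt and l=l] by auto
    from lslope_affine[OF assms(1) this] 2 show ?thesis by simp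
  next
    case 3
    then have "\<forall>x\<in>{l e / 2..t}. edge_fun src tgt l (tent l P) e x = -1/2 * x + l e / 2"
      using tent_affine_pieces(2)[where src=src and tgt=tgt and l=l] assms by auto
    from lslope_affine[OF _ this] 3 show ?thesis by simp
  qed
qed

lemma cycle_space_subset: "P \<in> cycle_space V E src tgt \<Longrightarrow> P \<subseteq> E"
  by (simp add: cycle_space_def)

lemma ord_tent:
  assumes "finite E" "\<forall>e\<in>E. 0 < l e" "P \<in> cycle_space V E src tgt" "p \<in> points V E l"
  shows "ord E src tgt l (tent l P) p = F_div src tgt l P p"
proof (cases p)
  case (Vert v)
  have "v \<in> V" using assms(4) Vert by simp
  then have "even (deg P src tgt v)" using assms(3) by (simp add: cycle_space_def)
  have "P \<subseteq> E" using assms(3) by (rule cycle_space_subset)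
  have "(\<Sum>e\<in>{e\<in>E. src e = v}. rslope (edge_fun src tgt l (tent l P) e) 0)
      = (\<Sum>e\<in>{e\<in>E. src e = v}. if e \<in> P then 1/2 else 0)"
    "(\<Sum>e\<in>{e\<in>E. tgt e = v}. - lslope (edge_fun src tgt l (tent l P) e) (l e))
      = (\<Sum>e\<in>{e\<in>E. tgt e = v}. if e \<in> P then 1/2 else 0)"
    using assms(2) by (auto simp: tent_rslope tent_lslope intro!: sum.cong)
  moreover have "{e\<in>{e\<in>E. src e = v}. e \<in> P} = {e\<in>P. src e = v}"
    "{e\<in>{e\<in>E. tgt e = v}. e \<in> P} = {e\<in>P. tgt e = v}"
    using \<open>P \<subseteq> E\<close> by auto
  ultimately have "ord E src tgt l (tent l P) p = deg P src tgt v / 2"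
    using assms(1) by (simp add: Vert sum.inter_filter[symmetric] deg_def add_divide_distrib)
  then show ?thesis
    using \<open>even (deg P src tgt v)\<close> by (auto simp: Vert F_div_def elim!: evenE)
next
  case (EPt e t)
  then show ?thesis using assms(4) by (simp add: tent_rslope tent_lslope F_div_def)
qed

lemma is_divisor_F_div:
  assumes "finite V" "finite E" "\<forall>e\<in>E. src e \<in> V \<and> tgt e \<in> V" "\<forall>e\<in>E. 0 < l e"
    and "P \<in> cycle_space V E src tgt"
  shows "is_divisor V E l (F_div src tgt l P)"
proof -
  have "P \<subseteq> E" using assms(5) by (rule cycle_space_subset)
  have "{p. F_div src tgt l P p \<noteq> 0} \<subseteq> Vert ` V \<union> (\<lambda>e. EPt e (l e / 2)) ` E"
  proof
    fix p assume "p \<in> {p. F_div src tgt l P p \<noteq> 0}"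
    then have "F_div src tgt l P p \<noteq> 0" by simp
    then show "p \<in> Vert ` V \<union> (\<lambda>e. EPt e (l e / 2)) ` E"
    proof (cases p)
      case (Vert v)
      with \<open>F_div src tgt l P p \<noteq> 0\<close> have "deg P src tgt v \<noteq> 0" by (simp add: F_div_def)
      then have "{e\<in>P. src e = v} \<noteq> {} \<or> {e\<in>P. tgt e = v} \<noteq> {}"
        unfolding deg_def by (metis add_0 card.empty)
      then have "v \<in> V" using \<open>P \<subseteq> E\<close> assms(3) by blast
      then show ?thesis using Vert by simp
    next
      case (EPt e t)
      then show ?thesis
        using \<open>F_div src tgt l P p \<noteq> 0\<close> \<open>P \<subseteq> E\<close> by (auto simp: F_div_def split: if_splits)
    qed
  qed
  moreover have "Vert ` V \<union> (\<lambda>e. EPt e (l e / 2)) ` E \<subseteq> points V E l"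
    using assms(4) by auto
  ultimately show ?thesis
    using assms(1,2) unfolding is_divisor_def by (auto dest: finite_subset)
qed

lemma principal_two_F_div:
  assumes "finite V" "finite E" "\<forall>e\<in>E. src e \<in> V \<and> tgt e \<in> V" "\<forall>e\<in>E. 0 < l e"
    and "P \<in> cycle_space V E src tgt"
  shows "principal V E src tgt l (\<lambda>p. 2 * F_div src tgt l P p)"
proof -
  let ?f = "\<lambda>p. 2 * tent l P p + 0 * tent l P p"
  have "rslope (edge_fun src tgt l ?f e) t = 2 * rslope (edge_fun src tgt l (tent l P) e) t
      + 0 * rslope (edge_fun src tgt l (tent l P) e) t" if "t \<in> {0..<l e}" for e t
    unfolding edge_fun_lincomb
    using that by (intro rslope_lincomb[OF piecewise_affine_tent piecewise_affine_tent]) auto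
  then have "rslope (edge_fun src tgt l ?f e) t \<in> \<int>" if "t \<in> {0..<l e}" for e t
    using that by (simp add: tent_rslope)
  moreover have "piecewise_affine_fun E src tgt l ?f"
    by (intro piecewise_affine_fun_lincomb piecewise_affine_fun_tent)
  ultimately have "rational_fun V E src tgt l ?f"
    using rational_fun_iff[OF assms(4)] by blast
  moreover have "2 * F_div src tgt l P p = ord E src tgt l ?f p" if "p \<in> points V E l" for p
    using ord_lincomb[OF assms(4) piecewise_affine_fun_tent[of E src tgt l P]
        piecewise_affine_fun_tent[of E src tgt l P] that, where \<alpha>=2 and \<beta>=0]
      ord_tent[OF assms(2,4,5) that] by simp
  moreover have "is_divisor V E l (\<lambda>p. 2 * F_div src tgt l P p)"
    using is_divisor_lincomb[of V E l _ _ 2 0] is_divisor_F_div[OF assms] by simp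
  ultimately show ?thesis unfolding principal_def by auto
qed

section \<open>Harmonic functions and injectivity\<close>

lemma sum_by_endpoint:
  fixes U :: "'v \<Rightarrow> real" and \<sigma> :: "'e \<Rightarrow> real"
  assumes "finite V" "finite E" "\<forall>e\<in>E. h e \<in> V"
  shows "(\<Sum>e\<in>E. U (h e) * \<sigma> e) = (\<Sum>v\<in>V. U v * (\<Sum>e\<in>{e\<in>E. h e = v}. \<sigma> e))"
proof -
  have "(\<Sum>e\<in>E. U (h e) * \<sigma> e) = (\<Sum>v\<in>V. \<Sum>e\<in>{e\<in>E. h e = v}. U (h e) * \<sigma> e)"
    using assms by (intro sum.group[symmetric]) auto
  also have "\<dots> = (\<Sum>v\<in>V. U v * (\<Sum>e\<in>{e\<in>E. h e = v}. \<sigma> e))"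
    by (intro sum.cong refl) (auto simp: sum_distrib_left intro!: sum.cong)
  finally show ?thesis .
qed

lemma potential_circulation_orthogonal:
  fixes U :: "'v \<Rightarrow> real" and \<sigma> :: "'e \<Rightarrow> real"
  assumes "finite V" "finite E" "\<forall>e\<in>E. src e \<in> V \<and> tgt e \<in> V"
    and circulation: "\<And>v. v \<in> V \<Longrightarrow> (\<Sum>e\<in>{e\<in>E. src e = v}. \<sigma> e) = (\<Sum>e\<in>{e\<in>E. tgt e = v}. \<sigma> e)"
  shows "(\<Sum>e\<in>E. (U (src e) - U (tgt e)) * \<sigma> e) = 0"
proof -
  have "(\<Sum>e\<in>E. (U (src e) - U (tgt e)) * \<sigma> e)
      = (\<Sum>e\<in>E. U (src e) * \<sigma> e) - (\<Sum>e\<in>E. U (tgt e) * \<sigma> e)"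
    by (simp add: left_diff_distrib sum_subtractf)
  also have "\<dots> = (\<Sum>v\<in>V. U v * (\<Sum>e\<in>{e\<in>E. src e = v}. \<sigma> e))
      - (\<Sum>v\<in>V. U v * (\<Sum>e\<in>{e\<in>E. tgt e = v}. \<sigma> e))"
    using assms(1-3) by (simp add: sum_by_endpoint)
  also have "\<dots> = 0"
    using circulation by (simp add: sum_subtractf[symmetric] right_diff_distrib[symmetric])
  finally show ?thesis .
qed

lemma harmonic_affine_on_edge:
  assumes pos: "\<forall>e\<in>E. 0 < l e" and u: "piecewise_affine_fun E src tgt l u"
    and harmonic: "\<forall>p\<in>points V E l. ord E src tgt l u p = 0" and "e \<in> E"
  shows "\<forall>t\<in>{0..l e}. edge_fun src tgt l u e t = rslope (edge_fun src tgt l u e) 0 * t + u (Vert (src e))"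
proof -
  have "rslope (edge_fun src tgt l u e) t = lslope (edge_fun src tgt l u e) t"
    if "0 < t" "t < l e" for t
    using bspec[OF harmonic, of "EPt e t"] \<open>e \<in> E\<close> that by simp
  then show ?thesis
    using piecewise_affine_without_kinks[of "l e" "edge_fun src tgt l u e"] \<open>e \<in> E\<close> u pos
    by (simp add: piecewise_affine_fun_def edge_fun_def[of _ _ _ _ _ 0])
qed

lemma harmonic_edge_slopes_vanish:
  assumes fin: "finite V" "finite E" and ends: "\<forall>e\<in>E. src e \<in> V \<and> tgt e \<in> V"
    and pos: "\<forall>e\<in>E. 0 < l e" and u: "piecewise_affine_fun E src tgt l u"
    and harmonic: "\<forall>p\<in>points V E l. ord E src tgt l u p = 0"
    and "e \<in> E"
  shows "rslope (edge_fun src tgt l u e) 0 = 0"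
proof -
  define \<sigma> where "\<sigma> e = rslope (edge_fun src tgt l u e) 0" for e
  define U where "U v = u (Vert v)" for v
  note affine = harmonic_affine_on_edge[OF pos u harmonic, folded \<sigma>_def U_def]
  have "U (tgt e) = \<sigma> e * l e + U (src e)" if "e \<in> E" for e
  proof -
    have "l e \<in> {0..l e}" "\<not> l e \<le> 0" using pos that by auto
    then show ?thesis using bspec[OF affine[OF that], of "l e"] by (simp add: edge_fun_def U_def)
  qed
  then have "(U (src e) - U (tgt e)) * \<sigma> e = - (\<sigma> e * \<sigma> e * l e)" if "e \<in> E" for e
    using that by (simp add: algebra_simps)
  moreover have "(\<Sum>e\<in>E. (U (src e) - U (tgt e)) * \<sigma> e) = 0"
  proof (rule potential_circulation_orthogonal[OF fin ends])
    have "lslope (edge_fun src tgt l u e) (l e) = \<sigma> e" if "e \<in> E" for e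
      using lslope_affine affine[OF that] pos that by blast
    then have "(\<Sum>e\<in>{e\<in>E. tgt e = v}. - lslope (edge_fun src tgt l u e) (l e))
        = - (\<Sum>e\<in>{e\<in>E. tgt e = v}. \<sigma> e)" for v
      by (simp add: sum_negf[symmetric])
    moreover have "ord E src tgt l u (Vert v) = 0" if "v \<in> V" for v
      using bspec[OF harmonic, of "Vert v"] that by simp
    ultimately show "(\<Sum>e\<in>{e\<in>E. src e = v}. \<sigma> e) = (\<Sum>e\<in>{e\<in>E. tgt e = v}. \<sigma> e)"
      if "v \<in> V" for v
      using that by (simp add: \<sigma>_def)
  qed
  ultimately have "(\<Sum>e\<in>E. \<sigma> e * \<sigma> e * l e) = 0"
    by (simp add: sum_negf cong: sum.cong)
  moreover have "0 \<le> \<sigma> e * \<sigma> e * l e" if "e \<in> E" for e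
    using pos that by (simp add: less_imp_le)
  ultimately have "\<forall>e\<in>E. \<sigma> e * \<sigma> e * l e = 0"
    by (subst (asm) sum_nonneg_eq_0_iff[OF fin(2)])
  then have "\<sigma> e * \<sigma> e * l e = 0" using \<open>e \<in> E\<close> by blast
  then show ?thesis using bspec[OF pos \<open>e \<in> E\<close>] by (simp add: \<sigma>_def)
qed

lemma rslope_eq_if_ord_eq:
  assumes fin: "finite V" "finite E" and ends: "\<forall>e\<in>E. src e \<in> V \<and> tgt e \<in> V"
    and pos: "\<forall>e\<in>E. 0 < l e"
    and f: "piecewise_affine_fun E src tgt l f" and h: "piecewise_affine_fun E src tgt l h"
    and same_ord: "\<forall>p\<in>points V E l. ord E src tgt l f p = ord E src tgt l h p"
    and "e \<in> E"
  shows "rslope (edge_fun src tgt l f e) 0 = rslope (edge_fun src tgt l h e) 0"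
proof -
  let ?u = "\<lambda>p. 1 * f p + (-1) * h p"
  have "piecewise_affine_fun E src tgt l ?u" by (rule piecewise_affine_fun_lincomb[OF f h])
  moreover have "\<forall>p\<in>points V E l. ord E src tgt l ?u p = 0"
  proof
    fix p assume "p \<in> points V E l"
    then show "ord E src tgt l ?u p = 0"
      using ord_lincomb[OF pos f h \<open>p \<in> points V E l\<close>, where \<alpha>=1 and \<beta>="-1"] same_ord by simp
  qed
  ultimately have "rslope (edge_fun src tgt l ?u e) 0 = 0"
    by (rule harmonic_edge_slopes_vanish[OF fin ends pos _ _ \<open>e \<in> E\<close>])
  moreover have "rslope (edge_fun src tgt l ?u e) 0
      = 1 * rslope (edge_fun src tgt l f e) 0 + (-1) * rslope (edge_fun src tgt l h e) 0"
    unfolding edge_fun_lincomb using f h pos \<open>e \<in> E\<close> unfolding piecewise_affine_fun_def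
    by (intro rslope_lincomb) auto
  ultimately show ?thesis by simp
qed

lemma half_notin_Ints: "(1/2 :: real) \<notin> \<int>"
proof
  assume "(1/2 :: real) \<in> \<int>"
  then obtain k :: int where "1/2 = (of_int k :: real)" by (auto elim: Ints_cases)
  then have "(1 :: real) = of_int (2 * k)" by simp
  then have "1 = 2 * k" by linarith
  then show False by presburger
qed

lemma inj_on_F_div_class:
  assumes fin: "finite V" "finite E" and ends: "\<forall>e\<in>E. src e \<in> V \<and> tgt e \<in> V"
    and pos: "\<forall>e\<in>E. 0 < l e"
  shows "inj_on (\<lambda>P. div_class V E src tgt l (F_div src tgt l P)) (cycle_space V E src tgt)"
proof (rule inj_onI, rule ccontr)
  fix P Q
  assume P: "P \<in> cycle_space V E src tgt" and Q: "Q \<in> cycle_space V E src tgt"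
    and eq: "div_class V E src tgt l (F_div src tgt l P) = div_class V E src tgt l (F_div src tgt l Q)"
    and "P \<noteq> Q"
  then obtain e where e: "e \<in> E" "e \<in> P \<longleftrightarrow> e \<notin> Q"
    using cycle_space_subset[OF P] cycle_space_subset[OF Q] by blast
  have "0 < l e" using pos e(1) by blast
  obtain f where f: "rational_fun V E src tgt l f"
    and div_f: "\<forall>p\<in>points V E l. of_int (F_div src tgt l P p - F_div src tgt l Q p) = ord E src tgt l f p"
    using principal_if_div_class_eq[OF pos is_divisor_F_div[OF fin ends pos Q] eq]
    unfolding principal_def by blast
  let ?h = "\<lambda>p. 1 * tent l P p + (-1) * tent l Q p"
  note tents = piecewise_affine_fun_tent[of E src tgt l P] piecewise_affine_fun_tent[of E src tgt l Q]
  have "\<forall>p\<in>points V E l. ord E src tgt l f p = ord E src tgt l ?h p"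
  proof
    fix p assume p: "p \<in> points V E l"
    show "ord E src tgt l f p = ord E src tgt l ?h p"
      using ord_lincomb[OF pos tents p, where \<alpha>=1 and \<beta>="-1"] ord_tent[OF fin(2) pos P p]
        ord_tent[OF fin(2) pos Q p] bspec[OF div_f p]
      by simp
  qed
  then have "rslope (edge_fun src tgt l f e) 0 = rslope (edge_fun src tgt l ?h e) 0"
    using rslope_eq_if_ord_eq[OF fin ends pos rational_fun_piecewise_affine_fun[OF pos f]
        piecewise_affine_fun_lincomb[OF tents] _ e(1)] by blast
  also have "\<dots> = 1 * rslope (edge_fun src tgt l (tent l P) e) 0
      + (-1) * rslope (edge_fun src tgt l (tent l Q) e) 0"
    unfolding edge_fun_lincomb
    using \<open>0 < l e\<close> by (intro rslope_lincomb[OF piecewise_affine_tent piecewise_affine_tent]) auto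
  finally have "rslope (edge_fun src tgt l f e) 0 = 1/2 \<or> rslope (edge_fun src tgt l f e) 0 = - (1/2)"
    using e(2) \<open>0 < l e\<close> by (auto simp: tent_rslope)
  moreover have "rslope (edge_fun src tgt l f e) 0 \<in> \<int>"
    using rational_fun_rslope_Ints[OF pos f e(1)] \<open>0 < l e\<close> by simp
  ultimately show False using half_notin_Ints by (metis minus_minus Ints_minus)
qed

section \<open>Square roots of zero\<close>

lemma half_Ints_add: "(x :: real) / 2 \<in> \<int> \<Longrightarrow> y / 2 \<in> \<int> \<Longrightarrow> (x + y) / 2 \<in> \<int>"
  by (simp add: add_divide_distrib)

lemma half_Ints_parity:
  fixes r :: real
  assumes "r \<in> \<int>"
  shows "(r - of_bool (r / 2 \<notin> \<int>)) / 2 \<in> \<int>"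
proof (cases "r / 2 \<in> \<int>")
  case False
  obtain k :: int where "r = of_int k" using assms by (auto elim: Ints_cases)
  with False have "odd k" by (auto elim!: evenE)
  then obtain m where "k = 2 * m + 1" by (auto elim!: oddE)
  then show ?thesis using \<open>r = of_int k\<close> False by simp
qed simp

lemma even_if_half_Ints: "real n / 2 \<in> \<int> \<Longrightarrow> even n"
proof -
  assume "real n / 2 \<in> \<int>"
  then obtain k :: int where "real n / 2 = of_int k" by (auto elim: Ints_cases)
  then have "int n = 2 * k" by linarith
  then show "even n" by presburger
qed

lemma rational_fun_slope_parity:
  assumes pos: "\<forall>e\<in>E. 0 < l e" and g: "rational_fun V E src tgt l g" and "e \<in> E"
    and even_kinks: "\<And>t. 0 < t \<Longrightarrow> t < l e \<Longrightarrow> ord E src tgt l g (EPt e t) / 2 \<in> \<int>"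
  shows "0 \<le> t \<Longrightarrow> t < l e \<Longrightarrow>
      (rslope (edge_fun src tgt l g e) t - rslope (edge_fun src tgt l g e) 0) / 2 \<in> \<int>"
    and "(lslope (edge_fun src tgt l g e) (l e) - rslope (edge_fun src tgt l g e) 0) / 2 \<in> \<int>"
proof -
  have "piecewise_affine (l e) (edge_fun src tgt l g e)"
    using rational_fun_piecewise_affine_fun[OF pos g] \<open>e \<in> E\<close> by (simp add: piecewise_affine_fun_def)
  note jumps = piecewise_affine_slope_jumps[OF this, where G="{x. x / 2 \<in> \<int>}"]
  have "0 < l e" using pos \<open>e \<in> E\<close> by blast
  show "0 \<le> t \<Longrightarrow> t < l e \<Longrightarrow>
      (rslope (edge_fun src tgt l g e) t - rslope (edge_fun src tgt l g e) 0) / 2 \<in> \<int>"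
    using jumps(2) \<open>0 < l e\<close> even_kinks by (simp add: half_Ints_add)
  show "(lslope (edge_fun src tgt l g e) (l e) - rslope (edge_fun src tgt l g e) 0) / 2 \<in> \<int>"
    using jumps(1) \<open>0 < l e\<close> even_kinks by (simp add: half_Ints_add)
qed

definition odd_slope_edges ::
    "'e set \<Rightarrow> ('e \<Rightarrow> 'v) \<Rightarrow> ('e \<Rightarrow> 'v) \<Rightarrow> ('e \<Rightarrow> real) \<Rightarrow> (('v, 'e) pt \<Rightarrow> real) \<Rightarrow> 'e set" where
  "odd_slope_edges E src tgt l g = {e\<in>E. rslope (edge_fun src tgt l g e) 0 / 2 \<notin> \<int>}"

lemma odd_slope_edges_parity:
  assumes pos: "\<forall>e\<in>E. 0 < l e" and g: "rational_fun V E src tgt l g"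
    and even: "\<forall>p\<in>points V E l. ord E src tgt l g p / 2 \<in> \<int>" and "e \<in> E"
  defines "\<epsilon> \<equiv> of_bool (e \<in> odd_slope_edges E src tgt l g) :: real"
  shows "0 \<le> t \<Longrightarrow> t < l e \<Longrightarrow> (rslope (edge_fun src tgt l g e) t - \<epsilon>) / 2 \<in> \<int>"
    and "(- lslope (edge_fun src tgt l g e) (l e) - \<epsilon>) / 2 \<in> \<int>"
proof -
  let ?r = "rslope (edge_fun src tgt l g e) 0"
  have "0 < l e" using pos \<open>e \<in> E\<close> by blast
  then have "?r \<in> \<int>" using rational_fun_rslope_Ints[OF pos g \<open>e \<in> E\<close>] by simp
  then have base: "(?r - \<epsilon>) / 2 \<in> \<int>"
    using half_Ints_parity \<open>e \<in> E\<close> by (simp add: \<epsilon>_def odd_slope_edges_def)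
  have kinks: "ord E src tgt l g (EPt e t) / 2 \<in> \<int>" if "0 < t" "t < l e" for t
    using bspec[OF even, of "EPt e t"] \<open>e \<in> E\<close> that by simp
  note drift = rational_fun_slope_parity[OF pos g \<open>e \<in> E\<close> kinks]
  show "0 \<le> t \<Longrightarrow> t < l e \<Longrightarrow> (rslope (edge_fun src tgt l g e) t - \<epsilon>) / 2 \<in> \<int>"
    using half_Ints_add[OF drift(1) base] by simp
  have "(- lslope (edge_fun src tgt l g e) (l e) - \<epsilon>) / 2
      = - ((lslope (edge_fun src tgt l g e) (l e) - \<epsilon>) / 2) - \<epsilon>"
    by (simp add: field_simps)
  also have "\<dots> \<in> \<int>"
    using half_Ints_add[OF drift(2) base] by (intro Ints_diff Ints_minus) (auto simp: \<epsilon>_def)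
  finally show "(- lslope (edge_fun src tgt l g e) (l e) - \<epsilon>) / 2 \<in> \<int>" .
qed

lemma odd_slope_edges_cycle:
  assumes "finite E" and pos: "\<forall>e\<in>E. 0 < l e" and g: "rational_fun V E src tgt l g"
    and even: "\<forall>p\<in>points V E l. ord E src tgt l g p / 2 \<in> \<int>"
  shows "odd_slope_edges E src tgt l g \<in> cycle_space V E src tgt"
  unfolding cycle_space_def
proof (intro CollectI conjI ballI)
  let ?P = "odd_slope_edges E src tgt l g"
  let ?\<epsilon> = "\<lambda>e. of_bool (e \<in> ?P) :: real"
  show "?P \<subseteq> E" by (auto simp: odd_slope_edges_def)
  fix v assume "v \<in> V"
  let ?out = "{e\<in>E. src e = v}" and ?into = "{e\<in>E. tgt e = v}"
  have "?out \<inter> {e. e \<in> ?P} = {e\<in>?P. src e = v}" "?into \<inter> {e. e \<in> ?P} = {e\<in>?P. tgt e = v}"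
    using \<open>?P \<subseteq> E\<close> by auto
  then have "real (deg ?P src tgt v) = (\<Sum>e\<in>?out. ?\<epsilon> e) + (\<Sum>e\<in>?into. ?\<epsilon> e)"
    using \<open>finite E\<close> by (simp add: deg_def)
  also have "\<dots> = ord E src tgt l g (Vert v)
      - (\<Sum>e\<in>?out. rslope (edge_fun src tgt l g e) 0 - ?\<epsilon> e)
      - (\<Sum>e\<in>?into. - lslope (edge_fun src tgt l g e) (l e) - ?\<epsilon> e)"
    by (simp add: sum_subtractf)
  finally have deg_half: "real (deg ?P src tgt v) / 2 = ord E src tgt l g (Vert v) / 2
      - (\<Sum>e\<in>?out. (rslope (edge_fun src tgt l g e) 0 - ?\<epsilon> e) / 2)
      - (\<Sum>e\<in>?into. (- lslope (edge_fun src tgt l g e) (l e) - ?\<epsilon> e) / 2)"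
    by (simp only: sum_divide_distrib[symmetric]) (simp add: diff_divide_distrib)
  have ord_half: "ord E src tgt l g (Vert v) / 2 \<in> \<int>"
    using bspec[OF even, of "Vert v"] \<open>v \<in> V\<close> by simp
  have out_half: "(rslope (edge_fun src tgt l g e) 0 - ?\<epsilon> e) / 2 \<in> \<int>"
    and into_half: "(- lslope (edge_fun src tgt l g e) (l e) - ?\<epsilon> e) / 2 \<in> \<int>" if "e \<in> E" for e
    using odd_slope_edges_parity(1)[OF pos g even that, of 0] odd_slope_edges_parity(2)[OF pos g even that]
      pos that by auto
  have "real (deg ?P src tgt v) / 2 \<in> \<int>"
    unfolding deg_half by (intro Ints_diff Ints_sum ord_half out_half into_half; simp)
  then show "even (deg ?P src tgt v)" by (rule even_if_half_Ints)
qed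

lemma rational_fun_half_minus_tent:
  assumes pos: "\<forall>e\<in>E. 0 < l e" and g: "rational_fun V E src tgt l g"
    and even: "\<forall>p\<in>points V E l. ord E src tgt l g p / 2 \<in> \<int>"
  shows "rational_fun V E src tgt l (\<lambda>p. 1/2 * g p + (-1) * tent l (odd_slope_edges E src tgt l g) p)"
    (is "rational_fun V E src tgt l ?h")
proof -
  let ?P = "odd_slope_edges E src tgt l g"
  have pg: "piecewise_affine_fun E src tgt l g" by (rule rational_fun_piecewise_affine_fun[OF pos g])
  have "rslope (edge_fun src tgt l ?h e) t \<in> \<int>" if "e \<in> E" "0 \<le> t" "t < l e" for e t
  proof -
    have "rslope (edge_fun src tgt l ?h e) t
        = 1/2 * rslope (edge_fun src tgt l g e) t + (-1) * rslope (edge_fun src tgt l (tent l ?P) e) t"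
      unfolding edge_fun_lincomb using pg that
      by (intro rslope_lincomb) (auto simp: piecewise_affine_fun_def piecewise_affine_tent)
    also have "\<dots> = (rslope (edge_fun src tgt l g e) t - of_bool (e \<in> ?P)) / 2
        + of_bool (e \<in> ?P \<and> l e / 2 \<le> t)"
      using that by (simp add: tent_rslope field_simps)
    also have "\<dots> \<in> \<int>"
      using odd_slope_edges_parity(1)[OF pos g even that] by (intro Ints_add) auto
    finally show ?thesis .
  qed
  moreover have "piecewise_affine_fun E src tgt l ?h"
    by (intro piecewise_affine_fun_lincomb pg piecewise_affine_fun_tent)
  ultimately show ?thesis by (auto simp: rational_fun_iff[OF pos])
qed

lemma two_torsion_class_eq_F_div_class:
  fixes V :: "'v set" and E :: "'e set"
  assumes fin: "finite V" "finite E" and ends: "\<forall>e\<in>E. src e \<in> V \<and> tgt e \<in> V"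
    and pos: "\<forall>e\<in>E. 0 < l e"
    and D: "is_divisor V E l D" and two_D: "principal V E src tgt l (\<lambda>p. 2 * D p)"
  obtains P where "P \<in> cycle_space V E src tgt"
    "div_class V E src tgt l D = div_class V E src tgt l (F_div src tgt l P)"
proof -
  obtain g where g: "rational_fun V E src tgt l g"
    and div_g: "\<forall>p\<in>points V E l. of_int (2 * D p) = ord E src tgt l g p"
    using two_D unfolding principal_def by blast
  have even: "\<forall>p\<in>points V E l. ord E src tgt l g p / 2 \<in> \<int>"
  proof
    fix p assume "p \<in> points V E l"
    then have "ord E src tgt l g p / 2 = of_int (D p)" using div_g by force
    then show "ord E src tgt l g p / 2 \<in> \<int>" by simp
  qed
  let ?P = "odd_slope_edges E src tgt l g"
  let ?h = "\<lambda>p. 1/2 * g p + (-1) * tent l ?P p"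
  have P: "?P \<in> cycle_space V E src tgt" by (rule odd_slope_edges_cycle[OF fin(2) pos g even])
  have "of_int (D p - F_div src tgt l ?P p) = ord E src tgt l ?h p" if "p \<in> points V E l" for p
    using ord_lincomb[OF pos rational_fun_piecewise_affine_fun[OF pos g]
        piecewise_affine_fun_tent[of E src tgt l ?P] that, where \<alpha>="1/2" and \<beta>="-1"]
      ord_tent[OF fin(2) pos P that] bspec[OF div_g that]
    by simp
  moreover have "is_divisor V E l (\<lambda>p. D p - F_div src tgt l ?P p)"
    using is_divisor_lincomb[OF D is_divisor_F_div[OF fin ends pos P], of 1 "-1"] by simp
  ultimately have "principal V E src tgt l (\<lambda>p. D p - F_div src tgt l ?P p)"
    using rational_fun_half_minus_tent[OF pos g even] unfolding principal_def by blast
  with that P div_class_eqI[OF pos] show thesis by blast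
qed

lemma F_div_class_image:
  assumes fin: "finite V" "finite E" and ends: "\<forall>e\<in>E. src e \<in> V \<and> tgt e \<in> V"
    and pos: "\<forall>e\<in>E. 0 < l e"
  shows "(\<lambda>P. div_class V E src tgt l (F_div src tgt l P)) ` cycle_space V E src tgt
           = R_trop V E src tgt l"
proof (intro equalityI subsetI)
  fix X assume "X \<in> (\<lambda>P. div_class V E src tgt l (F_div src tgt l P)) ` cycle_space V E src tgt"
  then obtain P where "P \<in> cycle_space V E src tgt" "X = div_class V E src tgt l (F_div src tgt l P)"
    by blast
  then show "X \<in> R_trop V E src tgt l"
    using is_divisor_F_div[OF fin ends pos] principal_two_F_div[OF fin ends pos]
    unfolding R_trop_def by blast
next
  fix X assume "X \<in> R_trop V E src tgt l"
  then obtain D where "X = div_class V E src tgt l D" "is_divisor V E l D"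
    "principal V E src tgt l (\<lambda>p. 2 * D p)"
    unfolding R_trop_def by blast
  with two_torsion_class_eq_F_div_class[OF fin ends pos] show
    "X \<in> (\<lambda>P. div_class V E src tgt l (F_div src tgt l P)) ` cycle_space V E src tgt"
    by (metis image_eqI)
qed

theorem proposition3p1:
  fixes V :: "'v set" and E :: "'e set" and src tgt :: "'e \<Rightarrow> 'v"
    and w :: "'v \<Rightarrow> nat" and l :: "'e \<Rightarrow> real"
  assumes "tropical_curve V E src tgt w l"
  shows "bij_betw (\<lambda>P. div_class V E src tgt l (F_div src tgt l P))
           (cycle_space V E src tgt) (R_trop V E src tgt l)"
proof -
  have fin: "finite V" "finite E" and ends: "\<forall>e\<in>E. src e \<in> V \<and> tgt e \<in> V"
    and pos: "\<forall>e\<in>E. 0 < l e"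
    using assms unfolding tropical_curve_def by auto
  show ?thesis
    unfolding bij_betw_def
    using inj_on_F_div_class[OF fin ends pos] F_div_class_image[OF fin ends pos] by blast
qed

end
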